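(* Let $\overline{G}_n=\overline{H}_0\overline{H}_1\cdots\overline{H}_{n-1}$ be a polyphenyl hexagonal chain with $n$ hexagons and $G_n=H_0H_1\cdots H_{n-1}$ its hexagonal squeeze. Then $$25\,W(\overline{G}_n)=36\,W(G_n)+150n^3-270n^2-177n.$$
   Context: The Wiener index is $W(G)=\sum_{\{u,v\}\subseteq V(G)}d_G(u,v)$, $d_G$ the shortest-path distance. A polyphenyl hexagonal chain $\overline{G}_n=\overline{H}_0\cdots\overline{H}_{n-1}$ of length $n$ consists of pairwise vertex-disjoint hexagons (6-cycles) $\overline{H}_0,\dots,\overline{H}_{n-1}$ together with cut-edges: $\overline{G}_1=\overline{H}_0$, and for $k\ge1$, $\overline{G}_{k+1}$ is obtained from $\overline{G}_k$ by adding $\overline{H}_k$ and a cut-edge joining a vertex $c_k$ of $\overline{H}_k$ to a vertex $t_k$ of $\overline{H}_{k-1}$, where for $k\ge2$, $t_k\ne c_{k-1}$. The hexagonal squeeze of $\overline{G}_n$ is the graph $G_n$ obtained by contracting every cut-edge $c_kt_k$ into a single vertex; it is a spiro hexagonal chain, i.e. a connected graph whose blocks are $n$ hexagons $H_0,\dots,H_{n-1}$, consecutive hexagons $H_{k-1},H_k$ sharing one cut-vertex, each cut-vertex shared by exactly two hexagons and each hexagon having at most two cut-vertices. *)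

theory Defs
  imports Main
begin

definition is_walk :: "('a \<Rightarrow> 'a \<Rightarrow> bool) \<Rightarrow> 'a list \<Rightarrow> bool" where
  "is_walk E xs \<longleftrightarrow> xs \<noteq> [] \<and> (\<forall>i. Suc i < length xs \<longrightarrow> E (xs ! i) (xs ! Suc i))"

definition gdist :: "('a \<Rightarrow> 'a \<Rightarrow> bool) \<Rightarrow> 'a \<Rightarrow> 'a \<Rightarrow> nat" where
  "gdist E u v = (LEAST k. \<exists>xs. is_walk E xs \<and> hd xs = u \<and> last xs = v \<and> length xs = Suc k)"

text \<open>Wiener index: sum of distances over unordered pairs of vertices, i.e. half the
  sum over ordered pairs (distances are symmetric and d(u,u)=0).\<close>
definition wiener :: "'a set \<Rightarrow> ('a \<Rightarrow> 'a \<Rightarrow> bool) \<Rightarrow> nat" where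
  "wiener V E = (\<Sum>u\<in>V. \<Sum>v\<in>V. gdist E u v) div 2"

text \<open>Hexagon H_k has vertices (k,0),...,(k,5), in cyclic order.\<close>
definition hex_vertices :: "nat \<Rightarrow> (nat \<times> nat) set" where
  "hex_vertices n = {(k, i). k < n \<and> i < 6}"

definition hex_adj :: "nat \<Rightarrow> nat \<times> nat \<Rightarrow> nat \<times> nat \<Rightarrow> bool" where
  "hex_adj n x y \<longleftrightarrow> fst x = fst y \<and> fst x < n \<and> snd x < 6 \<and> snd y < 6 \<and>
     (snd y = (snd x + 1) mod 6 \<or> snd x = (snd y + 1) mod 6)"

text \<open>Cut edge c_k t_k joins vertex (k, c k) of H_k to vertex (k-1, t k) of H_{k-1}, 1 \<le> k < n.\<close>
definition cut_adj :: "nat \<Rightarrow> (nat \<Rightarrow> nat) \<Rightarrow> (nat \<Rightarrow> nat) \<Rightarrow> nat \<times> nat \<Rightarrow> nat \<times> nat \<Rightarrow> bool" where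
  "cut_adj n c t x y \<longleftrightarrow> (\<exists>k. 1 \<le> k \<and> k < n \<and>
     ((x = (k, c k) \<and> y = (k - 1, t k)) \<or> (y = (k, c k) \<and> x = (k - 1, t k))))"

definition poly_adj :: "nat \<Rightarrow> (nat \<Rightarrow> nat) \<Rightarrow> (nat \<Rightarrow> nat) \<Rightarrow> nat \<times> nat \<Rightarrow> nat \<times> nat \<Rightarrow> bool" where
  "poly_adj n c t x y \<longleftrightarrow> hex_adj n x y \<or> cut_adj n c t x y"

definition polyphenyl_chain :: "nat \<Rightarrow> (nat \<Rightarrow> nat) \<Rightarrow> (nat \<Rightarrow> nat) \<Rightarrow> bool" where
  "polyphenyl_chain n c t \<longleftrightarrow> n \<ge> 1 \<and>
     (\<forall>k. 1 \<le> k \<and> k < n \<longrightarrow> c k < 6 \<and> t k < 6) \<and>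
     (\<forall>k. 2 \<le> k \<and> k < n \<longrightarrow> t k \<noteq> c (k - 1))"

text \<open>Contraction of every cut edge: vertex (k, c k) is identified with (k-1, t k).\<close>
definition squeeze_map :: "nat \<Rightarrow> (nat \<Rightarrow> nat) \<Rightarrow> (nat \<Rightarrow> nat) \<Rightarrow> nat \<times> nat \<Rightarrow> nat \<times> nat" where
  "squeeze_map n c t x = (if 1 \<le> fst x \<and> fst x < n \<and> snd x = c (fst x)
                          then (fst x - 1, t (fst x)) else x)"

definition squeeze_vertices :: "nat \<Rightarrow> (nat \<Rightarrow> nat) \<Rightarrow> (nat \<Rightarrow> nat) \<Rightarrow> (nat \<times> nat) set" where
  "squeeze_vertices n c t = squeeze_map n c t ` hex_vertices n"

definition squeeze_adj :: "nat \<Rightarrow> (nat \<Rightarrow> nat) \<Rightarrow> (nat \<Rightarrow> nat) \<Rightarrow> nat \<times> nat \<Rightarrow> nat \<times> nat \<Rightarrow> bool" where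
  "squeeze_adj n c t x y \<longleftrightarrow>
     (\<exists>a b. hex_adj n a b \<and> squeeze_map n c t a = x \<and> squeeze_map n c t b = y)"

end

theory Submission
  imports Defs
begin

text \<open>Both distance functions are given by one explicit formula: a shortest path from H_k to
  H_l (k < l) leaves H_k at t_(k+1), crosses every intermediate hexagon H_m from c_m to
  t_(m+1), enters H_l at c_l, and uses the l - k cut edges in between, which have length 1 in
  the polyphenyl chain and length 0 after the squeeze. The formula is certified as the graph
  distance by checking that it is 1-Lipschitz along edges and that every vertex other than the
  source has a neighbour one step closer. Appending a hexagon then increases the sums of
  distances over ordered pairs by amounts that depend on the attachment vertices only through
  the total T of the crossing distances, namely by 72 T and 50 T respectively; so T cancels
  from 25 W(polyphenyl) - 36 W(squeeze), and induction on n leaves a cubic polynomial.\<close>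

section \<open>Distances in a hexagon\<close>

definition hex_dist :: "nat \<Rightarrow> nat \<Rightarrow> nat" where
  "hex_dist i j = (let d = max i j - min i j in min d (6 - d))"

definition cyc_adj :: "nat \<Rightarrow> nat \<Rightarrow> bool" where
  "cyc_adj i j \<longleftrightarrow> j = Suc i mod 6 \<or> i = Suc j mod 6"

lemma all_less_6: "(\<forall>i::nat<6. P i) \<longleftrightarrow> P 0 \<and> P 1 \<and> P 2 \<and> P 3 \<and> P 4 \<and> P 5"
  by (simp add: numeral_eq_Suc All_less_Suc conj_ac)

lemma ex_less_6: "(\<exists>i::nat<6. P i) \<longleftrightarrow> P 0 \<or> P 1 \<or> P 2 \<or> P 3 \<or> P 4 \<or> P 5"
  by (simp add: numeral_eq_Suc Ex_less_Suc disj_ac)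

lemma sum_less_6: "(\<Sum>j<6::nat. f j) = f 0 + f 1 + f 2 + f 3 + f 4 + (f 5 :: nat)"
  by (simp add: numeral_eq_Suc)

lemma hex_dist_sym: "hex_dist i j = hex_dist j i"
  unfolding hex_dist_def by (simp add: max.commute min.commute)

lemma hex_dist_self [simp]: "hex_dist i i = 0"
  unfolding hex_dist_def by simp

lemma hex_dist_cyc_adj_le:
  assumes "i < 6" "j < 6" "j' < 6" "cyc_adj j j'"
  shows "hex_dist i j' \<le> hex_dist i j + 1"
proof -
  have "\<forall>i<6. \<forall>j<6. \<forall>j'<6. cyc_adj j j' \<longrightarrow> hex_dist i j' \<le> hex_dist i j + 1"
    unfolding all_less_6 by (simp add: hex_dist_def cyc_adj_def)
  then show ?thesis using assms by blast
qed

lemma hex_dist_predecessor: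
  assumes "e < 6" "j < 6" "e \<noteq> j"
  obtains j' where "j' < 6" "cyc_adj j' j" "hex_dist e j' + 1 = hex_dist e j"
proof -
  have "\<forall>e<6. \<forall>j<6. e \<noteq> j \<longrightarrow> (\<exists>j'<6. cyc_adj j' j \<and> hex_dist e j' + 1 = hex_dist e j)"
    unfolding all_less_6 ex_less_6 by (simp add: hex_dist_def cyc_adj_def)
  then show ?thesis using assms that by blast
qed

lemma hex_dist_row_sum:
  assumes "e < 6"
  shows "(\<Sum>j<6. hex_dist e j) = 9"
proof -
  have "\<forall>e<6. (\<Sum>j<6. hex_dist e j) = 9"
    unfolding sum_less_6 all_less_6 by (simp add: hex_dist_def)
  then show ?thesis using assms by blast
qed

lemma hex_dist_column_sum: "e < 6 \<Longrightarrow> (\<Sum>j<6. hex_dist j e) = 9"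
  using hex_dist_row_sum by (simp add: hex_dist_sym[of _ e])

lemma hex_dist_total: "(\<Sum>i<6. \<Sum>j<6. hex_dist i j) = 54"
  unfolding sum_less_6 by (simp add: hex_dist_def)

lemma sum_less_6_remove: "(e::nat) < 6 \<Longrightarrow> (\<Sum>j<6. f j) = f e + (\<Sum>j\<in>{..<6}-{e}. f j :: nat)"
  by (simp add: sum.remove)

lemma hex_dist_row_sum_remove: "e < 6 \<Longrightarrow> (\<Sum>j\<in>{..<6}-{e}. hex_dist e j) = 9"
  using sum_less_6_remove[of e "hex_dist e"] hex_dist_row_sum[of e] by simp

text \<open>Removing one vertex from a hexagon removes its two row sums of 9, which overlap in
  the zero diagonal entry: 54 - 9 - 9 = 36.\<close>
lemma hex_dist_total_remove: "e < 6 \<Longrightarrow> (\<Sum>i\<in>{..<6}-{e}. \<Sum>j\<in>{..<6}-{e}. hex_dist i j) = 36"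
proof -
  assume e: "e < 6"
  have "54 = (\<Sum>i<6. hex_dist i e + (\<Sum>j\<in>{..<6}-{e}. hex_dist i j))"
    using hex_dist_total sum_less_6_remove[OF e] by simp
  also have "\<dots> = 9 + (\<Sum>i<6. \<Sum>j\<in>{..<6}-{e}. hex_dist i j)"
    by (simp add: sum.distrib hex_dist_column_sum[OF e])
  also have "\<dots> = 18 + (\<Sum>i\<in>{..<6}-{e}. \<Sum>j\<in>{..<6}-{e}. hex_dist i j)"
    using sum_less_6_remove[OF e] hex_dist_row_sum_remove[OF e] by simp
  finally show ?thesis by simp
qed

section \<open>Graph distance from a potential function\<close>

lemma is_walk_snoc: "is_walk E xs \<Longrightarrow> E (last xs) y \<Longrightarrow> is_walk E (xs @ [y])"
  unfolding is_walk_def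
  by (auto simp: nth_append last_conv_nth less_Suc_eq) (metis diff_Suc_1')

lemma walk_potential_le:
  assumes step: "\<And>x y. E x y \<Longrightarrow> f y \<le> f x + (1::nat)"
    and walk: "is_walk E xs"
  shows "i < length xs \<Longrightarrow> f (xs ! i) \<le> f (hd xs) + i"
proof (induction i)
  case 0
  then show ?case by (simp add: hd_conv_nth)
next
  case (Suc i)
  then have "E (xs ! i) (xs ! Suc i)" using walk unfolding is_walk_def by auto
  then show ?case using Suc step by fastforce
qed

lemma walk_from_potential:
  assumes descend: "\<And>v. v \<in> V \<Longrightarrow> v \<noteq> u \<Longrightarrow> \<exists>y\<in>V. E y v \<and> f y + 1 = (f v :: nat)"
    and "f u = 0"
  shows "v \<in> V \<Longrightarrow> \<exists>xs. is_walk E xs \<and> hd xs = u \<and> last xs = v \<and> length xs = Suc (f v)"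
proof (induction "f v" arbitrary: v rule: less_induct)
  case less
  show ?case
  proof (cases "v = u")
    case True
    then show ?thesis using \<open>f u = 0\<close> by (intro exI[of _ "[u]"]) (auto simp: is_walk_def)
  next
    case False
    then obtain y where y: "y \<in> V" "E y v" "f y + 1 = f v" using descend less.prems by blast
    then obtain xs where "is_walk E xs" "hd xs = u" "last xs = y" "length xs = Suc (f y)"
      using less.hyps[of y] by auto
    then show ?thesis using y is_walk_snoc[of E xs v]
      by (intro exI[of _ "xs @ [v]"]) (auto simp: hd_append)
  qed
qed

lemma gdist_eqI:
  assumes step: "\<And>x y. E x y \<Longrightarrow> f y \<le> f x + (1::nat)" and "f u = 0"
    and descend: "\<And>v. v \<in> V \<Longrightarrow> v \<noteq> u \<Longrightarrow> \<exists>y\<in>V. E y v \<and> f y + 1 = f v"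
    and "v \<in> V"
  shows "gdist E u v = f v"
  unfolding gdist_def
proof (rule Least_equality)
  show "\<exists>xs. is_walk E xs \<and> hd xs = u \<and> last xs = v \<and> length xs = Suc (f v)"
    using walk_from_potential[OF descend \<open>f u = 0\<close> \<open>v \<in> V\<close>] by blast
next
  fix k assume "\<exists>xs. is_walk E xs \<and> hd xs = u \<and> last xs = v \<and> length xs = Suc k"
  then obtain xs where xs: "is_walk E xs" "hd xs = u" "last xs = v" "length xs = Suc k" by blast
  then have "xs \<noteq> []" by auto
  then show "f v \<le> k"
    using walk_potential_le[of E f xs k, OF step xs(1)] xs \<open>f u = 0\<close> by (simp add: last_conv_nth)
qed

section \<open>The distance formula for hexagonal chains\<close>

lemma hex_adj_iff:
  "hex_adj n x y \<longleftrightarrow> fst x = fst y \<and> fst x < n \<and> snd x < 6 \<and> snd y < 6 \<and> cyc_adj (snd x) (snd y)"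
  by (simp add: hex_adj_def cyc_adj_def)

definition attachments_in_range :: "nat \<Rightarrow> (nat \<Rightarrow> nat) \<Rightarrow> (nat \<Rightarrow> nat) \<Rightarrow> bool" where
  "attachments_in_range n c t \<longleftrightarrow> (\<forall>k. 1 \<le> k \<and> k < n \<longrightarrow> c k < 6 \<and> t k < 6)"

definition transit :: "(nat \<Rightarrow> nat) \<Rightarrow> (nat \<Rightarrow> nat) \<Rightarrow> nat \<Rightarrow> nat" where
  "transit c t m = hex_dist (c m) (t (Suc m))"

definition transit_sum :: "(nat \<Rightarrow> nat) \<Rightarrow> (nat \<Rightarrow> nat) \<Rightarrow> nat \<Rightarrow> nat \<Rightarrow> nat" where
  "transit_sum c t k l = (\<Sum>m\<in>{Suc k..<l}. transit c t m)"

text \<open>The weight w is the length of a cut edge: 1 in the polyphenyl chain, 0 in its squeeze.\<close>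
fun chain_dist :: "nat \<Rightarrow> (nat \<Rightarrow> nat) \<Rightarrow> (nat \<Rightarrow> nat) \<Rightarrow> nat \<times> nat \<Rightarrow> nat \<times> nat \<Rightarrow> nat" where
  "chain_dist w c t (k, i) (l, j) =
     (if k < l then hex_dist i (t (Suc k)) + transit_sum c t k l + hex_dist (c l) j + w * (l - k)
      else if l < k then hex_dist j (t (Suc l)) + transit_sum c t l k + hex_dist (c k) i + w * (k - l)
      else hex_dist i j)"

lemma chain_dist_sym: "chain_dist w c t u v = chain_dist w c t v u"
  by (cases u; cases v) (simp add: hex_dist_sym)

lemma chain_dist_self [simp]: "chain_dist w c t u u = 0"
  by (cases u) simp

lemma transit_sum_Suc_self [simp]: "transit_sum c t k (Suc k) = 0"
  by (simp add: transit_sum_def)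

lemma transit_sum_Suc_right: "k < l \<Longrightarrow> transit_sum c t k (Suc l) = transit_sum c t k l + transit c t l"
  by (simp add: transit_sum_def)

lemma transit_sum_Suc_left: "Suc k < l \<Longrightarrow> transit_sum c t k l = transit c t (Suc k) + transit_sum c t (Suc k) l"
  by (simp add: transit_sum_def sum.atLeast_Suc_lessThan)

lemma chain_dist_cut_edge_right:
  "k < Suc m \<Longrightarrow> chain_dist w c t (k, i) (Suc m, c (Suc m)) = chain_dist w c t (k, i) (m, t (Suc m)) + w"
  by (cases "k = m") (auto simp: transit_sum_Suc_right transit_def hex_dist_sym Suc_diff_le)

lemma chain_dist_cut_edge_left:
  "Suc m \<le> k \<Longrightarrow> chain_dist w c t (k, i) (m, t (Suc m)) = chain_dist w c t (k, i) (Suc m, c (Suc m)) + w"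
  using Suc_diff_Suc[of m k] mult_Suc_right[of w "k - Suc m"]
  by (cases "k = Suc m") (auto simp: transit_sum_Suc_left transit_def hex_dist_sym)

lemma chain_dist_hex_adj_le:
  assumes "hex_adj n x y" "u \<in> hex_vertices n" "attachments_in_range n c t"
  shows "chain_dist w c t u y \<le> chain_dist w c t u x + 1"
proof -
  obtain k i where u: "u = (k, i)" by fastforce
  obtain l j j' where xy: "x = (l, j)" "y = (l, j')" and adj: "j < 6" "j' < 6" "cyc_adj j j'"
    using assms(1) by (cases x; cases y) (auto simp: hex_adj_iff)
  have "k < n" "i < 6" "l < n" using assms(1,2) u xy by (auto simp: hex_vertices_def hex_adj_iff)
  consider "k < l" | "l < k" | "k = l" by linarith
  then show ?thesis
  proof cases
    case 1
    then have "c l < 6" using assms(3) \<open>l < n\<close> by (simp add: attachments_in_range_def)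
    then show ?thesis using 1 hex_dist_cyc_adj_le[OF _ adj] by (simp add: u xy)
  next
    case 2
    then have "t (Suc l) < 6" using assms(3) \<open>k < n\<close> by (simp add: attachments_in_range_def)
    then show ?thesis using 2 hex_dist_cyc_adj_le[OF _ adj] by (simp add: u xy hex_dist_sym[of _ "t (Suc l)"])
  next
    case 3
    then show ?thesis using \<open>i < 6\<close> hex_dist_cyc_adj_le[OF _ adj] by (simp add: u xy)
  qed
qed

section \<open>Distances in the polyphenyl chain and in its squeeze\<close>

lemma chain_dist_poly_adj_le:
  assumes "poly_adj n c t x y" "u \<in> hex_vertices n" "attachments_in_range n c t"
  shows "chain_dist 1 c t u y \<le> chain_dist 1 c t u x + 1"
proof (cases "hex_adj n x y")
  case True
  then show ?thesis using chain_dist_hex_adj_le assms(2,3) by blast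
next
  case False
  obtain k i where u: "u = (k, i)" by fastforce
  obtain m where "Suc m < n"
    "(x = (Suc m, c (Suc m)) \<and> y = (m, t (Suc m))) \<or> (y = (Suc m, c (Suc m)) \<and> x = (m, t (Suc m)))"
  proof -
    obtain l where "1 \<le> l" "l < n" "(x = (l, c l) \<and> y = (l - 1, t l)) \<or> (y = (l, c l) \<and> x = (l - 1, t l))"
      using assms(1) False unfolding poly_adj_def cut_adj_def by blast
    then show ?thesis using that[of "l - 1"] by simp
  qed
  then show ?thesis
    using chain_dist_cut_edge_right[of k m 1 c t i] chain_dist_cut_edge_left[of m k 1 c t i] u
    by (cases "k \<le> m") auto
qed

lemma poly_adj_predecessor:
  assumes "u \<in> hex_vertices n" "x \<in> hex_vertices n" "x \<noteq> u" "attachments_in_range n c t"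
  obtains y where "y \<in> hex_vertices n" "poly_adj n c t y x"
    "chain_dist 1 c t u y + 1 = chain_dist 1 c t u x"
proof -
  obtain k i l j where u: "u = (k, i)" and x: "x = (l, j)" by fastforce
  have bounds: "k < n" "i < 6" "l < n" "j < 6" using assms(1,2) unfolding u x hex_vertices_def by auto
  txt \<open>Within H_l the distance from u is the hexagon distance from the vertex e through
    which shortest paths from u enter H_l, plus a constant.\<close>
  define e where "e = (if k < l then c l else if l < k then t (Suc l) else i)"
  have "e < 6" using assms(4) bounds by (auto simp: e_def attachments_in_range_def)
  have along: "chain_dist 1 c t u (l, j') = chain_dist 1 c t u (l, e) + hex_dist e j'" for j'
    by (auto simp: e_def u hex_dist_sym)
  show ?thesis
  proof (cases "j = e")
    case False
    then obtain j' where "j' < 6" "cyc_adj j' j" "hex_dist e j' + 1 = hex_dist e j"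
      using hex_dist_predecessor[OF \<open>e < 6\<close> \<open>j < 6\<close>] by metis
    then show ?thesis
      using that[of "(l, j')"] along[of j'] along[of j] bounds
      by (simp add: x hex_vertices_def poly_adj_def hex_adj_iff)
  next
    case True
    consider "k < l" | "l < k" using assms(3) True u x e_def by fastforce
    then show ?thesis
    proof cases
      case 1
      then obtain m where m: "l = Suc m" by (cases l) auto
      have "t l < 6" using assms(4) bounds m by (simp add: attachments_in_range_def)
      moreover have "cut_adj n c t (m, t l) x"
        unfolding cut_adj_def using 1 True bounds m by (auto simp: x e_def)
      ultimately show ?thesis
        using that[of "(m, t l)"] 1 True m chain_dist_cut_edge_right[of k m 1 c t i] bounds
        by (simp add: x u e_def hex_vertices_def poly_adj_def)
    next
      case 2
      have "c (Suc l) < 6" using assms(4) bounds 2 by (simp add: attachments_in_range_def)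
      moreover have "cut_adj n c t (Suc l, c (Suc l)) x"
        unfolding cut_adj_def using 2 True bounds by (auto simp: x e_def intro!: exI[of _ "Suc l"])
      ultimately show ?thesis
        using that[of "(Suc l, c (Suc l))"] 2 True chain_dist_cut_edge_left[of l k 1 c t i] bounds
        by (simp add: x u e_def hex_vertices_def poly_adj_def)
    qed
  qed
qed

lemma gdist_poly_adj:
  assumes "attachments_in_range n c t" "u \<in> hex_vertices n" "v \<in> hex_vertices n"
  shows "gdist (poly_adj n c t) u v = chain_dist 1 c t u v"
proof (rule gdist_eqI[where V = "hex_vertices n"])
  show "chain_dist 1 c t u y \<le> chain_dist 1 c t u x + 1" if "poly_adj n c t x y" for x y
    using chain_dist_poly_adj_le[OF that assms(2,1)] .
  show "\<exists>y\<in>hex_vertices n. poly_adj n c t y x \<and> chain_dist 1 c t u y + 1 = chain_dist 1 c t u x"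
    if "x \<in> hex_vertices n" "x \<noteq> u" for x
    using poly_adj_predecessor[OF assms(2) that assms(1)] by blast
qed (use assms in simp_all)

lemma polyphenyl_chain_attachments_in_range: "polyphenyl_chain n c t \<Longrightarrow> attachments_in_range n c t"
  by (simp add: polyphenyl_chain_def attachments_in_range_def)

definition reduced_vertices :: "nat \<Rightarrow> (nat \<Rightarrow> nat) \<Rightarrow> (nat \<times> nat) set" where
  "reduced_vertices n c = {(k, i). k < n \<and> i < 6 \<and> (k = 0 \<or> i \<noteq> c k)}"

lemma reduced_vertices_fixed:
  "v \<in> reduced_vertices n c \<Longrightarrow> v \<in> hex_vertices n \<and> squeeze_map n c t v = v"
  by (auto simp: reduced_vertices_def hex_vertices_def squeeze_map_def)

text \<open>Here the hypothesis t_k \<noteq> c_(k-1) is needed: it prevents a contracted vertex from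
  being contracted a second time.\<close>
lemma squeeze_vertices_eq:
  assumes "polyphenyl_chain n c t"
  shows "squeeze_vertices n c t = reduced_vertices n c"
proof
  show "squeeze_vertices n c t \<subseteq> reduced_vertices n c"
    using assms unfolding squeeze_vertices_def
    by (force simp: polyphenyl_chain_def squeeze_map_def hex_vertices_def reduced_vertices_def le_diff_conv2)
  show "reduced_vertices n c \<subseteq> squeeze_vertices n c t"
    unfolding squeeze_vertices_def using reduced_vertices_fixed by (metis image_eqI subsetI)
qed

lemma cut_adj_squeeze_map_eq:
  "polyphenyl_chain n c t \<Longrightarrow> cut_adj n c t y x \<Longrightarrow> squeeze_map n c t y = squeeze_map n c t x"
  by (auto simp: polyphenyl_chain_def squeeze_map_def cut_adj_def le_diff_conv2)

lemma chain_dist_squeeze_map: "chain_dist 0 c t u (squeeze_map n c t a) = chain_dist 0 c t u a"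
proof -
  obtain k i m j where u: "u = (k, i)" and a: "a = (m, j)" by fastforce
  show ?thesis
  proof (cases "1 \<le> m \<and> m < n \<and> j = c m")
    case True
    then obtain m' where "m = Suc m'" by (cases m) auto
    then show ?thesis
      using chain_dist_cut_edge_right[of k m' 0 c t i] chain_dist_cut_edge_left[of m' k 0 c t i] True u a
      by (cases "k < m") (auto simp: squeeze_map_def)
  next
    case False
    then show ?thesis by (auto simp: squeeze_map_def a)
  qed
qed

text \<open>Follow a shortest path of the polyphenyl chain backwards from x until its last edge is a
  hexagon edge: the cut edges passed on the way are contracted by the squeeze and cost
  nothing in chain_dist 0.\<close>
lemma squeeze_predecessor:
  assumes chain: "polyphenyl_chain n c t"
    and u: "u \<in> hex_vertices n" "squeeze_map n c t u = u"
    and x: "x \<in> hex_vertices n" "squeeze_map n c t x \<noteq> u"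
  obtains a b where "hex_adj n a b" "squeeze_map n c t b = squeeze_map n c t x"
    "chain_dist 0 c t u a + 1 = chain_dist 0 c t u x"
  using x
proof (induction "chain_dist 1 c t u x" arbitrary: x thesis rule: less_induct)
  case less
  have "x \<noteq> u" using less.prems u by auto
  then obtain y where y: "y \<in> hex_vertices n" "poly_adj n c t y x"
    "chain_dist 1 c t u y + 1 = chain_dist 1 c t u x"
    using poly_adj_predecessor[OF u(1) less.prems(2) _ polyphenyl_chain_attachments_in_range[OF chain]] by blast
  show ?case
  proof (cases "hex_adj n y x")
    case True
    then have "chain_dist 0 c t u y + 1 = chain_dist 0 c t u x"
      using y(3) by (cases u; cases x; cases y) (auto simp: hex_adj_iff)
    then show ?thesis using True less.prems(1) by blast
  next
    case False
    then have "cut_adj n c t y x" using y(2) by (simp add: poly_adj_def)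
    then have same: "squeeze_map n c t y = squeeze_map n c t x"
      using cut_adj_squeeze_map_eq[OF chain] by blast
    then have "chain_dist 0 c t u y = chain_dist 0 c t u x"
      by (metis chain_dist_squeeze_map)
    then show ?thesis
      using less.hyps[of y] y same less.prems by auto
  qed
qed

lemma gdist_squeeze_adj:
  assumes chain: "polyphenyl_chain n c t"
    and "u \<in> squeeze_vertices n c t" "v \<in> squeeze_vertices n c t"
  shows "gdist (squeeze_adj n c t) u v = chain_dist 0 c t u v"
proof (rule gdist_eqI[where V = "squeeze_vertices n c t"])
  have u: "u \<in> hex_vertices n" "squeeze_map n c t u = u"
    using assms(2) reduced_vertices_fixed by (auto simp: squeeze_vertices_eq[OF chain])
  show "chain_dist 0 c t u y \<le> chain_dist 0 c t u x + 1" if adj: "squeeze_adj n c t x y" for x y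
  proof -
    obtain a b where ab: "hex_adj n a b" "x = squeeze_map n c t a" "y = squeeze_map n c t b"
      using adj unfolding squeeze_adj_def by blast
    then show ?thesis
      using chain_dist_hex_adj_le[OF ab(1) u(1) polyphenyl_chain_attachments_in_range[OF chain]]
      by (simp add: chain_dist_squeeze_map)
  qed
  show "\<exists>y\<in>squeeze_vertices n c t. squeeze_adj n c t y v' \<and> chain_dist 0 c t u y + 1 = chain_dist 0 c t u v'"
    if v': "v' \<in> squeeze_vertices n c t" "v' \<noteq> u" for v'
  proof -
    obtain x where x: "x \<in> hex_vertices n" "v' = squeeze_map n c t x"
      using v'(1) unfolding squeeze_vertices_def by blast
    then obtain a b where ab: "hex_adj n a b" "squeeze_map n c t b = v'"
      "chain_dist 0 c t u a + 1 = chain_dist 0 c t u x"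
      using squeeze_predecessor[OF chain u x(1)] v'(2) by metis
    have "a \<in> hex_vertices n" using ab(1) by (cases a) (simp add: hex_adj_iff hex_vertices_def)
    then show ?thesis
      using ab x unfolding squeeze_adj_def squeeze_vertices_def
      by (metis chain_dist_squeeze_map image_eqI)
  qed
qed (use assms in simp_all)

section \<open>Sums of distances\<close>

lemma sum_square_union:
  assumes "finite A" "finite B" "A \<inter> B = {}" "\<And>u v. f u v = f v u"
  shows "(\<Sum>u\<in>A \<union> B. \<Sum>v\<in>A \<union> B. f u v) =
    (\<Sum>u\<in>A. \<Sum>v\<in>A. f u v) + 2 * (\<Sum>u\<in>A. \<Sum>v\<in>B. f u v) + (\<Sum>u\<in>B. \<Sum>v\<in>B. f u v :: 'b :: comm_semiring_1)"
proof -
  have "(\<Sum>u\<in>B. \<Sum>v\<in>A. f u v) = (\<Sum>u\<in>A. \<Sum>v\<in>B. f u v)"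
    using sum.swap[of f B A] assms(4) by simp
  then show ?thesis
    using assms by (simp add: sum.union_disjoint sum.distrib mult_2 algebra_simps)
qed

lemma sum_image_Pair: "(\<Sum>v\<in>Pair k ` A. g v) = (\<Sum>j\<in>A. g (k, j))"
  by (simp add: sum.reindex inj_on_def)

lemma hex_vertices_eq: "hex_vertices n = {..<n} \<times> {..<6}"
  by (auto simp: hex_vertices_def)

lemma sum_hex_vertices: "(\<Sum>u\<in>hex_vertices n. g u) = (\<Sum>k<n. \<Sum>i<6. g (k, i))"
  by (simp add: hex_vertices_eq sum.cartesian_product)

lemma hex_vertices_Suc: "hex_vertices (Suc n) = hex_vertices n \<union> Pair n ` {..<6}"
  by (auto simp: hex_vertices_def)

definition reduced_hexagon :: "(nat \<Rightarrow> nat) \<Rightarrow> nat \<Rightarrow> nat set" where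
  "reduced_hexagon c k = (if k = 0 then {..<6} else {..<6} - {c k})"

lemma reduced_vertices_eq: "reduced_vertices n c = Sigma {..<n} (reduced_hexagon c)"
  by (auto simp: reduced_vertices_def reduced_hexagon_def split: if_splits)

lemma finite_reduced_vertices: "finite (reduced_vertices n c)"
  by (rule finite_subset[of _ "hex_vertices n"]) (auto simp: reduced_vertices_def hex_vertices_eq)

lemma sum_reduced_vertices:
  "(\<Sum>u\<in>reduced_vertices n c. g u) = (\<Sum>k<n. \<Sum>i\<in>reduced_hexagon c k. g (k, i))"
  unfolding reduced_vertices_eq by (subst sum.Sigma) (auto simp: reduced_hexagon_def)

lemma reduced_vertices_Suc:
  "1 \<le> n \<Longrightarrow> reduced_vertices (Suc n) c = reduced_vertices n c \<union> Pair n ` ({..<6} - {c n})"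
  by (auto simp: reduced_vertices_def less_Suc_eq)

definition poly_dist_sum :: "nat \<Rightarrow> (nat \<Rightarrow> nat) \<Rightarrow> (nat \<Rightarrow> nat) \<Rightarrow> nat" where
  "poly_dist_sum n c t = (\<Sum>u\<in>hex_vertices n. \<Sum>v\<in>hex_vertices n. chain_dist 1 c t u v)"

definition squeeze_dist_sum :: "nat \<Rightarrow> (nat \<Rightarrow> nat) \<Rightarrow> (nat \<Rightarrow> nat) \<Rightarrow> nat" where
  "squeeze_dist_sum n c t = (\<Sum>u\<in>reduced_vertices n c. \<Sum>v\<in>reduced_vertices n c. chain_dist 0 c t u v)"

definition transit_total :: "nat \<Rightarrow> (nat \<Rightarrow> nat) \<Rightarrow> (nat \<Rightarrow> nat) \<Rightarrow> nat" where
  "transit_total n c t = (\<Sum>k<n. transit_sum c t k n)"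

lemma attachments_in_range_Suc_D: "attachments_in_range (Suc n) c t \<Longrightarrow> attachments_in_range n c t"
  by (simp add: attachments_in_range_def)

lemma poly_cross_sum:
  assumes "attachments_in_range (Suc n) c t" "1 \<le> n"
  shows "(\<Sum>u\<in>hex_vertices n. \<Sum>j<6. chain_dist 1 c t u (n, j))
    = 108 * n + 36 * transit_total n c t + 36 * (\<Sum>k<n. n - k)"
proof -
  have "c n < 6" using assms by (simp add: attachments_in_range_def)
  have per_block: "(\<Sum>i<6. \<Sum>j<6. chain_dist 1 c t (k, i) (n, j))
      = 108 + 36 * transit_sum c t k n + 36 * (n - k)" if "k < n" for k
  proof -
    have "t (Suc k) < 6" using assms that by (simp add: attachments_in_range_def)
    have "(\<Sum>i<6. \<Sum>j<6. chain_dist 1 c t (k, i) (n, j)) = (\<Sum>i<6. \<Sum>j<6.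
        hex_dist i (t (Suc k)) + transit_sum c t k n + hex_dist (c n) j + (n - k))"
      using that by simp
    also have "\<dots> = 108 + 36 * transit_sum c t k n + 36 * (n - k)"
      using \<open>t (Suc k) < 6\<close> \<open>c n < 6\<close>
      by (simp add: sum.distrib hex_dist_row_sum hex_dist_column_sum sum_distrib_left[symmetric])
    finally show ?thesis .
  qed
  have "(\<Sum>u\<in>hex_vertices n. \<Sum>j<6. chain_dist 1 c t u (n, j))
      = (\<Sum>k<n. \<Sum>i<6. \<Sum>j<6. chain_dist 1 c t (k, i) (n, j))"
    unfolding sum_hex_vertices ..
  also have "\<dots> = (\<Sum>k<n. 108 + 36 * transit_sum c t k n + 36 * (n - k))"
    by (intro sum.cong refl per_block) simp
  also have "\<dots> = 108 * n + 36 * transit_total n c t + 36 * (\<Sum>k<n. n - k)"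
    by (simp add: sum.distrib transit_total_def sum_distrib_left)
  finally show ?thesis .
qed

lemma poly_dist_sum_Suc:
  assumes "attachments_in_range (Suc n) c t" "1 \<le> n"
  shows "poly_dist_sum (Suc n) c t
    = poly_dist_sum n c t + 2 * (108 * n + 36 * transit_total n c t + 36 * (\<Sum>k<n. n - k)) + 54"
proof -
  have "hex_vertices n \<inter> Pair n ` {..<6} = {}" by (auto simp: hex_vertices_def)
  then have "poly_dist_sum (Suc n) c t = poly_dist_sum n c t
      + 2 * (\<Sum>u\<in>hex_vertices n. \<Sum>j<6. chain_dist 1 c t u (n, j))
      + (\<Sum>i<6. \<Sum>j<6. chain_dist 1 c t (n, i) (n, j))"
    unfolding poly_dist_sum_def hex_vertices_Suc
    by (subst sum_square_union) (auto simp: hex_vertices_eq chain_dist_sym sum_image_Pair)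
  then show ?thesis using poly_cross_sum[OF assms] by (simp add: hex_dist_total)
qed

text \<open>In the squeezed chain a hexagon H_k with k \<ge> 1 has lost the vertex c_k, so its row sum
  towards t_(k+1) drops from 9 to 9 - transit c t k.\<close>
lemma squeeze_cross_sum:
  assumes "attachments_in_range (Suc n) c t" "1 \<le> n"
  shows "(\<Sum>u\<in>reduced_vertices n c. \<Sum>j\<in>{..<6}-{c n}. chain_dist 0 c t u (n, j))
    = 90 * n + 9 + 25 * transit_total n c t"
proof -
  have "c n < 6" using assms by (simp add: attachments_in_range_def)
  have t_lt: "t (Suc k) < 6" if "k < n" for k using assms that by (simp add: attachments_in_range_def)
  define g where "g k = (\<Sum>i\<in>reduced_hexagon c k. \<Sum>j\<in>{..<6}-{c n}. chain_dist 0 c t (k, i) (n, j))" for k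
  have g_eq: "g k = (\<Sum>i\<in>reduced_hexagon c k. \<Sum>j\<in>{..<6}-{c n}.
      hex_dist i (t (Suc k)) + transit_sum c t k n + hex_dist (c n) j)" if "k < n" for k
    unfolding g_def using that by (intro sum.cong refl) simp
  have g0: "g 0 = 99 + 30 * transit_sum c t 0 n"
    using g_eq[of 0] assms(2) t_lt[of 0] \<open>c n < 6\<close>
    by (simp add: reduced_hexagon_def sum.distrib hex_dist_row_sum_remove hex_dist_column_sum
        sum_distrib_left[symmetric])
  have g_Suc: "g k + 5 * transit c t k = 90 + 25 * transit_sum c t k n" if "k \<in> {1..<n}" for k
  proof -
    have "c k < 6" using assms that by (simp add: attachments_in_range_def)
    then have "(\<Sum>i\<in>{..<6}-{c k}. hex_dist i (t (Suc k))) + transit c t k = 9"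
      using sum_less_6_remove[of "c k" "\<lambda>i. hex_dist i (t (Suc k))"] hex_dist_column_sum[OF t_lt]
        that by (simp add: transit_def)
    then show ?thesis
      using g_eq[of k] that \<open>c k < 6\<close> \<open>c n < 6\<close>
      by (simp add: reduced_hexagon_def sum.distrib hex_dist_row_sum_remove sum_distrib_left[symmetric])
  qed
  have "(\<Sum>k\<in>{1..<n}. g k) + 5 * transit_sum c t 0 n = 90 * (n - 1) + 25 * (\<Sum>k\<in>{1..<n}. transit_sum c t k n)"
    using sum.cong[OF refl g_Suc, of "{1..<n}"]
    by (simp add: sum.distrib sum_distrib_left transit_sum_def)
  moreover have "(\<Sum>k<n. h k) = h 0 + (\<Sum>k\<in>{1..<n}. h k :: nat)" for h
    using assms(2) by (simp add: atLeast0LessThan[symmetric] sum.atLeast_Suc_lessThan)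
  ultimately have "(\<Sum>k<n. g k) = 90 * n + 9 + 25 * transit_total n c t"
    using g0 assms(2) by (simp add: transit_total_def)
  then show ?thesis
    unfolding g_def sum_reduced_vertices .
qed

lemma squeeze_dist_sum_Suc:
  assumes "attachments_in_range (Suc n) c t" "1 \<le> n"
  shows "squeeze_dist_sum (Suc n) c t
    = squeeze_dist_sum n c t + 2 * (90 * n + 9 + 25 * transit_total n c t) + 36"
proof -
  have "c n < 6" using assms by (simp add: attachments_in_range_def)
  have "reduced_vertices n c \<inter> Pair n ` ({..<6} - {c n}) = {}" by (auto simp: reduced_vertices_def)
  then have "squeeze_dist_sum (Suc n) c t = squeeze_dist_sum n c t
      + 2 * (\<Sum>u\<in>reduced_vertices n c. \<Sum>j\<in>{..<6}-{c n}. chain_dist 0 c t u (n, j))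
      + (\<Sum>i\<in>{..<6}-{c n}. \<Sum>j\<in>{..<6}-{c n}. chain_dist 0 c t (n, i) (n, j))"
    unfolding squeeze_dist_sum_def reduced_vertices_Suc[OF assms(2)]
    by (subst sum_square_union) (auto simp: finite_reduced_vertices chain_dist_sym sum_image_Pair)
  then show ?thesis
    using squeeze_cross_sum[OF assms] by (simp add: hex_dist_total_remove[OF \<open>c n < 6\<close>])
qed

lemma double_sum_lessThan_diff: "2 * (\<Sum>k<n. n - k) = n * (n + 1 :: nat)"
proof (induction n)
  case (Suc n)
  have "(\<Sum>k<Suc n. Suc n - k) = Suc n + (\<Sum>k<n. n - k)"
    by (subst sum.lessThan_Suc_shift) simp
  then show ?case using Suc by simp
qed simp

lemma poly_dist_sum_1: "poly_dist_sum 1 c t = 54"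
  by (simp add: poly_dist_sum_def sum_hex_vertices hex_dist_total)

lemma squeeze_dist_sum_1: "squeeze_dist_sum 1 c t = 54"
  by (simp add: squeeze_dist_sum_def sum_reduced_vertices reduced_hexagon_def hex_dist_total)

lemma dist_sums_identity:
  "1 \<le> n \<Longrightarrow> attachments_in_range n c t \<Longrightarrow> 25 * int (poly_dist_sum n c t)
    = 36 * int (squeeze_dist_sum n c t) + 2 * (150 * int n ^ 3 - 270 * int n ^ 2 - 177 * int n)"
proof (induction n rule: nat_induct_at_least)
  case base
  then show ?case using poly_dist_sum_1 squeeze_dist_sum_1 by simp
next
  case (Suc n)
  have "2 * int (\<Sum>k<n. n - k) = int n * (int n + 1)"
    using arg_cong[OF double_sum_lessThan_diff[of n], of int] by (simp add: distrib_left)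
  then show ?case
    using Suc attachments_in_range_Suc_D[OF Suc.prems]
    by (simp add: poly_dist_sum_Suc squeeze_dist_sum_Suc algebra_simps power3_eq_cube power2_eq_square)
qed

lemma even_sum_symmetric:
  fixes f :: "'a \<Rightarrow> 'a \<Rightarrow> nat"
  assumes "finite A" "\<And>u v. f u v = f v u" "\<And>u. f u u = 0"
  shows "even (\<Sum>u\<in>A. \<Sum>v\<in>A. f u v)"
  using assms(1)
proof (induction rule: finite_induct)
  case (insert x A)
  then have "(\<Sum>u\<in>A \<union> {x}. \<Sum>v\<in>A \<union> {x}. f u v) = (\<Sum>u\<in>A. \<Sum>v\<in>A. f u v) + 2 * (\<Sum>u\<in>A. f u x)"
    using sum_square_union[of A "{x}" f] assms(2,3) by simp
  then show ?case using insert.IH by simp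
qed simp

lemma wiener_poly_adj:
  assumes "polyphenyl_chain n c t"
  shows "2 * wiener (hex_vertices n) (poly_adj n c t) = poly_dist_sum n c t"
proof -
  have "(\<Sum>u\<in>hex_vertices n. \<Sum>v\<in>hex_vertices n. gdist (poly_adj n c t) u v) = poly_dist_sum n c t"
    unfolding poly_dist_sum_def
    using gdist_poly_adj[OF polyphenyl_chain_attachments_in_range[OF assms]] by (simp cong: sum.cong)
  moreover have "even (poly_dist_sum n c t)"
    unfolding poly_dist_sum_def by (rule even_sum_symmetric) (simp_all add: hex_vertices_eq chain_dist_sym)
  ultimately show ?thesis by (simp add: wiener_def)
qed

lemma wiener_squeeze_adj:
  assumes "polyphenyl_chain n c t"
  shows "2 * wiener (squeeze_vertices n c t) (squeeze_adj n c t) = squeeze_dist_sum n c t"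
proof -
  have "(\<Sum>u\<in>squeeze_vertices n c t. \<Sum>v\<in>squeeze_vertices n c t. gdist (squeeze_adj n c t) u v)
      = squeeze_dist_sum n c t"
    unfolding squeeze_dist_sum_def
    using gdist_squeeze_adj[OF assms] by (simp add: squeeze_vertices_eq[OF assms] cong: sum.cong)
  moreover have "even (squeeze_dist_sum n c t)"
    unfolding squeeze_dist_sum_def
    by (rule even_sum_symmetric) (simp_all add: finite_reduced_vertices chain_dist_sym)
  ultimately show ?thesis by (simp add: wiener_def)
qed

theorem theorem4p1:
  fixes n :: nat and c t :: "nat \<Rightarrow> nat"
  assumes "polyphenyl_chain n c t"
  shows "25 * int (wiener (hex_vertices n) (poly_adj n c t)) =
         36 * int (wiener (squeeze_vertices n c t) (squeeze_adj n c t))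
         + 150 * int n ^ 3 - 270 * int n ^ 2 - 177 * int n"
proof -
  have "1 \<le> n" using assms by (simp add: polyphenyl_chain_def)
  then have "25 * int (poly_dist_sum n c t) = 36 * int (squeeze_dist_sum n c t)
      + 2 * (150 * int n ^ 3 - 270 * int n ^ 2 - 177 * int n)"
    using dist_sums_identity polyphenyl_chain_attachments_in_range[OF assms] by blast
  then show ?thesis
    unfolding wiener_poly_adj[OF assms, symmetric] wiener_squeeze_adj[OF assms, symmetric] by simp
qed

end
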